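(* Let $n\geq 3$ and let $g\in C^1(-1,1)$ be such that $(1-t^2)^{\frac{n-1}{2}}g'(t)$ is integrable on $(-1,1)$. Then $(1-t^2)^{\frac{n-3}{2}}g(t)$ is integrable on $(-1,1)$ and for all $k\geq 0$, \[ a^{n+2}_k[g']=2\pi\, a^n_{k+1}[g]. \]
   Context: $\omega_m$ is the surface area of $\mathbb{S}^{m-1}$. For $N\ge3$, $k\ge0$, the Legendre polynomial is $P^N_k(t)=(-1)^k\frac{\Gamma(\frac{N-1}{2})}{2^k\Gamma(\frac{N-1}{2}+k)}(1-t^2)^{-\frac{N-3}{2}}\frac{d^k}{dt^k}(1-t^2)^{\frac{N-3}{2}+k}$. For a measurable $h$ on $(-1,1)$ with $(1-t^2)^{\frac{N-3}{2}}h(t)$ integrable, $a^N_k[h]=\omega_{N-1}\int_{-1}^1P^N_k(t)(1-t^2)^{\frac{N-3}{2}}h(t)\,dt$ (the $k$-th multiplier of the zonal function $h(\langle e_N,\cdot\rangle)$ on $\mathbb{S}^{N-1}$). *)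

theory Defs
  imports "HOL-Analysis.Analysis"
begin

text \<open>Surface area of the unit sphere S^(m-1) in R^m.\<close>
definition sphere_area :: "nat \<Rightarrow> real" where
  "sphere_area m = 2 * pi powr (real m / 2) / Gamma (real m / 2)"

text \<open>Legendre polynomial P^N_k via the Rodrigues formula (meaningful for t in (-1,1)).\<close>
definition legendre :: "nat \<Rightarrow> nat \<Rightarrow> real \<Rightarrow> real" where
  "legendre N k t =
     (-1) ^ k * Gamma ((real N - 1) / 2) / (2 ^ k * Gamma ((real N - 1) / 2 + real k))
     * (1 - t\<^sup>2) powr (- ((real N - 3) / 2))
     * (deriv ^^ k) (\<lambda>s. (1 - s\<^sup>2) powr ((real N - 3) / 2 + real k)) t"

definition multiplier :: "nat \<Rightarrow> nat \<Rightarrow> (real \<Rightarrow> real) \<Rightarrow> real" where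
  "multiplier N k h = sphere_area (N - 1) *
     (LINT t : {-1<..<1} | lborel. legendre N k t * (1 - t\<^sup>2) powr ((real N - 3) / 2) * h t)"

end

theory Submission
  imports Defs "HOL-Computational_Algebra.Polynomial"
begin

text \<open>
  Let \<open>\<beta> = (n - 1)/2\<close>. By the Rodrigues formula, \<open>P^(n+2)_k(t) (1 - t^2)^\<beta>\<close> and
  \<open>P^n_(k+1)(t) (1 - t^2)^(\<beta>-1)\<close> are, up to constants whose ratio is \<open>-2\<pi>\<close>, the \<open>k\<close>-th and
  \<open>(k+1)\<close>-st derivatives of \<open>(1 - t^2)^(\<beta>+k)\<close>, i.e. \<open>(1 - t^2)^\<beta>\<close> resp. \<open>(1 - t^2)^(\<beta>-1)\<close>
  times polynomials. So the identity is a single integration by parts; the work lies in showing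
  that \<open>(1 - t^2)^(\<beta>-1) g\<close> is integrable and that \<open>(1 - t^2)^\<beta> g\<close> vanishes at \<open>\<plusminus>1\<close>.
  Near \<open>1\<close> both follow from \<open>|g(t)| \<le> |g(0)| + \<integral>_0^t |g'|\<close> and the Hardy-type identity
  \<open>\<integral>_0^1 (1 - t)^(\<beta>-1) \<integral>_0^t u = \<beta>^(-1) \<integral>_0^1 (1 - s)^\<beta> u\<close> for \<open>u \<ge> 0\<close>;
  near \<open>-1\<close> by reflection.
\<close>

section \<open>Integrals over intervals and a Hardy-type inequality\<close>

lemma set_borel_measurable_lborel_continuous_on:
  fixes f :: "real \<Rightarrow> real"
  assumes "S \<in> sets borel" "continuous_on S f"
  shows "set_borel_measurable lborel S f"
  using set_measurable_continuous_on[OF assms] by (simp add: set_borel_measurable_def)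

lemma set_integral_by_parts:
  fixes f g f' g' :: "real \<Rightarrow> real" and a b A B :: real
  assumes "a < b"
    and f_deriv: "\<And>t. t \<in> {a<..<b} \<Longrightarrow> (f has_real_derivative f' t) (at t)"
    and g_deriv: "\<And>t. t \<in> {a<..<b} \<Longrightarrow> (g has_real_derivative g' t) (at t)"
    and f'_cont: "continuous_on {a<..<b} f'" and g'_cont: "continuous_on {a<..<b} g'"
    and int_fg': "set_integrable lborel {a<..<b} (\<lambda>t. f t * g' t)"
    and int_f'g: "set_integrable lborel {a<..<b} (\<lambda>t. f' t * g t)"
    and lim_a: "((\<lambda>t. f t * g t) \<longlongrightarrow> A) (at_right a)"
    and lim_b: "((\<lambda>t. f t * g t) \<longlongrightarrow> B) (at_left b)"
  shows "(LINT t:{a<..<b}|lborel. f t * g' t) = B - A - (LINT t:{a<..<b}|lborel. f' t * g t)"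
proof -
  have "(LBINT t=ereal a..ereal b. f' t * g t + f t * g' t) = B - A"
  proof (rule interval_integral_FTC_integrable)
    fix t
    assume "ereal a < ereal t" "ereal t < ereal b"
    then have t: "t \<in> {a<..<b}"
      by simp
    show "((\<lambda>t. f t * g t) has_vector_derivative f' t * g t + f t * g' t) (at t)"
      using DERIV_mult[OF f_deriv[OF t] g_deriv[OF t]]
      by (simp add: has_real_derivative_iff_has_vector_derivative[symmetric] mult.commute)
    show "isCont (\<lambda>t. f' t * g t + f t * g' t) t"
      using t f'_cont g'_cont DERIV_isCont[OF f_deriv[OF t]] DERIV_isCont[OF g_deriv[OF t]]
      by (intro continuous_intros) (auto simp: continuous_on_eq_continuous_at)
  next
    show "set_integrable lborel (einterval (ereal a) (ereal b)) (\<lambda>t. f' t * g t + f t * g' t)"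
      using set_integral_add(1)[OF int_f'g int_fg'] by simp
  qed (use \<open>a < b\<close> lim_a lim_b in \<open>auto simp: ereal_tendsto_simps1\<close>)
  then have "(LINT t:{a<..<b}|lborel. f' t * g t + f t * g' t) = B - A"
    by (simp add: interval_lebesgue_integral_def \<open>a < b\<close> less_imp_le)
  then show ?thesis
    using set_integral_add(2)[OF int_f'g int_fg'] by simp
qed

lemma set_integrable_poly_mult:
  fixes f :: "real \<Rightarrow> real"
  assumes "set_integrable lborel {a<..<b} f" "continuous_on {a<..<b} f"
  shows "set_integrable lborel {a<..<b} (\<lambda>t. poly p t * f t)"
proof -
  obtain C where C: "\<And>t. t \<in> {a..b} \<Longrightarrow> norm (poly p t) \<le> C"
    using continuous_on_compact_bound[OF compact_Icc continuous_on_poly[OF continuous_on_id]] by blast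
  show ?thesis
  proof (rule set_integrable_bound[where f = "\<lambda>t. C * f t"])
    show "set_integrable lborel {a<..<b} (\<lambda>t. C * f t)"
      using assms(1) by simp
    show "set_borel_measurable lborel {a<..<b} (\<lambda>t. poly p t * f t)"
      by (intro set_borel_measurable_lborel_continuous_on continuous_intros assms(2)) auto
    show "AE t in lborel. t \<in> {a<..<b} \<longrightarrow> norm (poly p t * f t) \<le> norm (C * f t)"
    proof (intro AE_I2 impI)
      fix t
      assume "t \<in> {a<..<b}"
      then have "\<bar>poly p t\<bar> \<le> \<bar>C\<bar>"
        using C[of t] by auto
      then show "norm (poly p t * f t) \<le> norm (C * f t)"
        by (simp add: abs_mult mult_right_mono)
    qed
  qed
qed

lemma has_real_derivative_integral_upper:
  fixes u :: "real \<Rightarrow> real"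
  assumes "continuous_on {a..<b} u" "a < t" "t < b"
  shows "((\<lambda>x. integral {a..x} u) has_real_derivative u t) (at t)"
proof -
  have "continuous_on {a..(t + b) / 2} u"
    using assms by (auto intro: continuous_on_subset)
  from integral_has_real_derivative[OF this, of t] assms show ?thesis
    by (simp add: at_within_Icc_at)
qed

lemma tendsto_integral_upper_at_right:
  fixes u :: "real \<Rightarrow> real"
  assumes "continuous_on {a..<b} u" "a < b"
  shows "((\<lambda>x. integral {a..x} u) \<longlongrightarrow> 0) (at_right a)"
proof -
  have "continuous_on {a..(a + b) / 2} u"
    using assms by (auto intro: continuous_on_subset)
  from integral_has_real_derivative[OF this, of a] assms
  have "continuous (at a within {a..(a + b) / 2}) (\<lambda>x. integral {a..x} u)"
    by (auto intro: DERIV_continuous)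
  moreover have "at a within {a..(a + b) / 2} = at_right a"
    using assms by (intro at_within_Icc_at_right) auto
  ultimately show ?thesis
    by (simp add: continuous_within)
qed

lemma at_within_Ico_at_left:
  fixes a b :: real
  assumes "a < b"
  shows "at b within {a..<b} = at_left b"
  by (rule at_within_nhd[where S = "{a<..}"]) (use assms in auto)

lemma tendsto_integral_upper_at_left:
  fixes w :: "real \<Rightarrow> real"
  assumes "a < b" and w_cont: "continuous_on {a..<b} w"
    and w_nonneg: "\<And>s. s \<in> {a..<b} \<Longrightarrow> 0 \<le> w s" and w_int: "w integrable_on {a..<b}"
  obtains L where "((\<lambda>t. integral {a..t} w) \<longlongrightarrow> L) (at_left b)"
    and "\<And>t. t \<in> {a..<b} \<Longrightarrow> integral {a..t} w \<le> L"
proof -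
  have int_Icc: "w integrable_on {s..t}" if "a \<le> s" "t < b" for s t
    using that by (intro integrable_continuous_real continuous_on_subset[OF w_cont]) auto
  let ?W = "\<lambda>t. integral {a..t} w"
  have mono: "?W s \<le> ?W t" if "s \<in> {a..<b}" "t \<in> {a..<b}" "s \<le> t" for s t
    using that by (intro integral_subset_le int_Icc) (auto intro: w_nonneg)
  have bounded: "?W t \<le> integral {a..<b} w" if "t \<in> {a..<b}" for t
    using that by (intro integral_subset_le int_Icc w_int) (auto intro: w_nonneg)
  have "(?W \<longlongrightarrow> Sup (?W ` ({..<b} \<inter> {a..<b}))) (at b within ({..<b} \<inter> {a..<b}))"
    by (rule Lim_left_bound[where K = "integral {a..<b} w"]) (use mono bounded in auto)
  moreover have "{..<b} \<inter> {a..<b} = {a..<b}"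
    by auto
  moreover have "?W t \<le> Sup (?W ` {a..<b})" if "t \<in> {a..<b}" for t
    using that bounded by (intro cSup_upper bdd_aboveI2) auto
  ultimately show ?thesis
    using that at_within_Ico_at_left[OF \<open>a < b\<close>] by auto
qed

lemma tendsto_diff_powr_at_left:
  fixes \<beta> b :: real
  assumes "\<beta> > 0"
  shows "((\<lambda>t. (b - t) powr \<beta>) \<longlongrightarrow> 0) (at_left b)"
  using assms by (intro tendsto_zero_powrI)
    (auto intro!: tendsto_eq_intros simp: eventually_at_left_field intro: exI[of _ "b - 1"])

lemma weighted_primitive_le:
  fixes u :: "real \<Rightarrow> real" and \<beta> s t :: real
  assumes "\<beta> \<ge> 0" and u_cont: "continuous_on {0..<1} u"
    and u_nonneg: "\<And>r. r \<in> {0..<1} \<Longrightarrow> 0 \<le> u r"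
    and "0 \<le> s" "s \<le> t" "t < 1"
  shows "(1 - t) powr \<beta> * integral {0..t} u
    \<le> (1 - t) powr \<beta> * integral {0..s} u + integral {s..t} (\<lambda>r. (1 - r) powr \<beta> * u r)"
proof -
  have integrable: "f integrable_on {a..b}"
    if "continuous_on {0..<1} f" "0 \<le> a" "b < 1" for f :: "real \<Rightarrow> real" and a b
    using that by (intro integrable_continuous_real continuous_on_subset[OF that(1)]) auto
  have "integral {0..t} u = integral {0..s} u + integral {s..t} u"
    using assms integrable[OF u_cont, of 0 t] Henstock_Kurzweil_Integration.integral_combine[of 0 s t u] by simp
  then have "(1 - t) powr \<beta> * integral {0..t} u
      = (1 - t) powr \<beta> * integral {0..s} u + integral {s..t} (\<lambda>r. (1 - t) powr \<beta> * u r)"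
    by (simp add: distrib_left)
  also have "integral {s..t} (\<lambda>r. (1 - t) powr \<beta> * u r) \<le> integral {s..t} (\<lambda>r. (1 - r) powr \<beta> * u r)"
    using assms integrable[OF u_cont, of s t]
    by (intro integral_le integrable_on_cmult_left integrable continuous_intros u_cont
        mult_right_mono powr_mono2) auto
  finally show ?thesis
    by simp
qed

lemma weighted_primitive_tendsto_0:
  fixes u :: "real \<Rightarrow> real" and \<beta> :: real
  assumes "\<beta> > 0" and u_cont: "continuous_on {0..<1} u"
    and u_nonneg: "\<And>s. s \<in> {0..<1} \<Longrightarrow> 0 \<le> u s"
    and weighted_int: "(\<lambda>s. (1 - s) powr \<beta> * u s) integrable_on {0..<1}"
  shows "((\<lambda>t. (1 - t) powr \<beta> * integral {0..t} u) \<longlongrightarrow> 0) (at_left 1)"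
proof (rule tendstoI)
  fix \<epsilon> :: real
  assume "\<epsilon> > 0"
  define w where "w = (\<lambda>s. (1 - s) powr \<beta> * u s)"
  have w_cont: "continuous_on {0..<1} w"
    unfolding w_def by (intro continuous_intros u_cont) auto
  obtain L where W_lim: "((\<lambda>t. integral {0..t} w) \<longlongrightarrow> L) (at_left 1)"
    and W_le: "\<And>t. t \<in> {0..<1} \<Longrightarrow> integral {0..t} w \<le> L"
    by (rule tendsto_integral_upper_at_left[of 0 1 w])
      (use w_cont u_nonneg weighted_int in \<open>auto simp: w_def\<close>)
  have "\<forall>\<^sub>F t in at_left 1. L - \<epsilon> / 2 < integral {0..t} w"
    using order_tendstoD(1)[OF W_lim] \<open>\<epsilon> > 0\<close> by simp
  moreover have "\<forall>\<^sub>F t in at_left 1. 0 \<le> t \<and> t < (1::real)"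
    unfolding eventually_at_left_field by (intro exI[of _ 0]) auto
  ultimately have "\<forall>\<^sub>F t in at_left 1. 0 \<le> t \<and> t < 1 \<and> L - \<epsilon> / 2 < integral {0..t} w"
    by eventually_elim blast
  then obtain t\<^sub>0 where t\<^sub>0: "0 \<le> t\<^sub>0" "t\<^sub>0 < 1" "L - \<epsilon> / 2 < integral {0..t\<^sub>0} w"
    using eventually_happens' trivial_limit_at_left_real by blast
  have "((\<lambda>t. (1 - t) powr \<beta> * integral {0..t\<^sub>0} u) \<longlongrightarrow> 0 * integral {0..t\<^sub>0} u) (at_left 1)"
    using \<open>\<beta> > 0\<close> by (intro tendsto_intros tendsto_diff_powr_at_left)
  then have "\<forall>\<^sub>F t in at_left 1. (1 - t) powr \<beta> * integral {0..t\<^sub>0} u < \<epsilon> / 2"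
    using order_tendstoD(2)[of _ 0 _ "\<epsilon> / 2"] \<open>\<epsilon> > 0\<close> by simp
  moreover have "\<forall>\<^sub>F t in at_left 1. t\<^sub>0 < t \<and> t < 1"
    unfolding eventually_at_left_field using t\<^sub>0 by blast
  ultimately show "\<forall>\<^sub>F t in at_left 1. dist ((1 - t) powr \<beta> * integral {0..t} u) 0 < \<epsilon>"
  proof eventually_elim
    case (elim t)
    have "w integrable_on {0..t}"
      using elim by (intro integrable_continuous_real continuous_on_subset[OF w_cont]) auto
    then have "integral {t\<^sub>0..t} w = integral {0..t} w - integral {0..t\<^sub>0} w"
      using elim t\<^sub>0 Henstock_Kurzweil_Integration.integral_combine[of 0 t\<^sub>0 t w] by simp
    then have "(1 - t) powr \<beta> * integral {0..t} u < \<epsilon>"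
      using weighted_primitive_le[OF _ u_cont u_nonneg, of \<beta> t\<^sub>0 t] W_le[of t] elim t\<^sub>0 \<open>\<beta> > 0\<close>
      unfolding w_def by auto
    moreover have "0 \<le> integral {0..t} u"
      using elim t\<^sub>0 u_nonneg
      by (intro integral_nonneg integrable_continuous_real continuous_on_subset[OF u_cont]) auto
    ultimately show ?case
      by simp
  qed
qed

lemma weighted_primitive_integrable:
  fixes u :: "real \<Rightarrow> real" and \<beta> c :: real
  assumes "\<beta> > 0" "c \<ge> 0" and u_cont: "continuous_on {0..<1} u"
    and u_nonneg: "\<And>s. s \<in> {0..<1} \<Longrightarrow> 0 \<le> u s"
    and weighted_int: "(\<lambda>s. (1 - s) powr \<beta> * u s) integrable_on {0..<1}"
  shows "set_integrable lborel {0<..<1} (\<lambda>t. (1 - t) powr (\<beta> - 1) * (c + integral {0..t} u))"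
proof -
  define w where "w = (\<lambda>s. (1 - s) powr \<beta> * u s)"
  have w_cont: "continuous_on {0..<1} w"
    unfolding w_def by (intro continuous_intros u_cont) auto
  obtain L where W_lim: "((\<lambda>t. integral {0..t} w) \<longlongrightarrow> L) (at_left 1)"
    by (rule tendsto_integral_upper_at_left[of 0 1 w])
      (use w_cont u_nonneg weighted_int in \<open>auto simp: w_def\<close>)
  \<comment> \<open>Integration by parts, with \<open>-(1 - t)^\<beta> / \<beta>\<close> as antiderivative of \<open>(1 - t)^(\<beta>-1)\<close>.\<close>
  define F where "F t = (integral {0..t} w - (1 - t) powr \<beta> * (c + integral {0..t} u)) / \<beta>" for t
  have "(F has_real_derivative (1 - t) powr (\<beta> - 1) * (c + integral {0..t} u)) (at t)"
    if "0 < t" "t < 1" for t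
  proof -
    have "(F has_real_derivative (w t - (\<beta> * (1 - t) powr (\<beta> - 1) * (- 1) * (c + integral {0..t} u)
        + (1 - t) powr \<beta> * u t)) / \<beta>) (at t)"
      unfolding F_def using that \<open>\<beta> > 0\<close>
        has_real_derivative_integral_upper[OF u_cont that] has_real_derivative_integral_upper[OF w_cont that]
      by (intro derivative_eq_intros) auto
    moreover have "(w t - (\<beta> * (1 - t) powr (\<beta> - 1) * (- 1) * (c + integral {0..t} u)
        + (1 - t) powr \<beta> * u t)) / \<beta> = (1 - t) powr (\<beta> - 1) * (c + integral {0..t} u)"
      using \<open>\<beta> > 0\<close> by (simp add: w_def field_simps)
    ultimately show ?thesis
      by simp
  qed
  moreover have "isCont (\<lambda>t. (1 - t) powr (\<beta> - 1) * (c + integral {0..t} u)) t"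
    if "0 < t" "t < 1" for t
    using that DERIV_isCont[OF has_real_derivative_integral_upper[OF u_cont that]]
    by (intro continuous_intros) auto
  moreover have "0 \<le> (1 - t) powr (\<beta> - 1) * (c + integral {0..t} u)" if "0 < t" "t < 1" for t
  proof -
    have "u integrable_on {0..t}"
      using that by (intro integrable_continuous_real continuous_on_subset[OF u_cont]) auto
    then have "0 \<le> integral {0..t} u"
      using that u_nonneg by (intro integral_nonneg) auto
    then show ?thesis
      using \<open>c \<ge> 0\<close> by simp
  qed
  moreover have "(F \<longlongrightarrow> (0 - (1 - 0) powr \<beta> * (c + 0)) / \<beta>) (at_right 0)"
    unfolding F_def using \<open>\<beta> > 0\<close>
    by (intro tendsto_intros tendsto_integral_upper_at_right[OF w_cont] tendsto_integral_upper_at_right[OF u_cont]) auto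
  moreover have "(F \<longlongrightarrow> (L - (0 + 0)) / \<beta>) (at_left 1)"
  proof -
    have "((\<lambda>t. (1 - t) powr \<beta> * c) \<longlongrightarrow> 0 * c) (at_left 1)"
      using \<open>\<beta> > 0\<close> by (intro tendsto_intros tendsto_diff_powr_at_left)
    then show ?thesis
      unfolding F_def distrib_left using \<open>\<beta> > 0\<close>
      by (intro tendsto_intros W_lim weighted_primitive_tendsto_0 assms) auto
  qed
  ultimately have "set_integrable lborel (einterval (ereal 0) (ereal 1))
      (\<lambda>t. (1 - t) powr (\<beta> - 1) * (c + integral {0..t} u))"
    by (intro interval_integral_FTC_nonneg(1)[where F = F]) (auto simp: ereal_tendsto_simps1)
  then show ?thesis
    by simp
qed

section \<open>Functions with weighted integrable derivative on (-1, 1)\<close>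

lemma one_minus_square_powr_le:
  fixes t a :: real
  assumes "0 \<le> t" "t < 1"
  shows "(1 - t\<^sup>2) powr a \<le> max 1 (2 powr a) * (1 - t) powr a"
proof -
  have "(1 + t) powr a \<le> max 1 (2 powr a)"
  proof (cases "a \<ge> 0")
    case True
    then have "(1 + t) powr a \<le> 2 powr a"
      using assms by (intro powr_mono2) auto
    then show ?thesis
      by simp
  next
    case False
    then have "(1 + t) powr a \<le> 1 powr a"
      using assms by (intro powr_mono2') auto
    then show ?thesis
      by simp
  qed
  moreover have "(1 - t\<^sup>2) powr a = (1 + t) powr a * (1 - t) powr a"
    using assms by (simp add: powr_mult[symmetric] power2_eq_square algebra_simps)
  ultimately show ?thesis
    by (simp add: mult_right_mono)
qed

lemma abs_le_integral_abs_deriv: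
  fixes g g' :: "real \<Rightarrow> real"
  assumes "a \<le> t"
    and g_deriv: "\<And>x. x \<in> {a..t} \<Longrightarrow> (g has_real_derivative g' x) (at x)"
    and g'_cont: "continuous_on {a..t} g'"
  shows "\<bar>g t\<bar> \<le> \<bar>g a\<bar> + integral {a..t} (\<lambda>s. \<bar>g' s\<bar>)"
proof -
  have "(g has_vector_derivative g' x) (at x within {a..t})" if "x \<in> {a..t}" for x
    using g_deriv[OF that] unfolding has_real_derivative_iff_has_vector_derivative
    by (rule has_vector_derivative_at_within)
  then have FTC: "(g' has_integral (g t - g a)) {a..t}"
    by (rule fundamental_theorem_of_calculus[OF \<open>a \<le> t\<close>])
  have "norm (integral {a..t} g') \<le> integral {a..t} (\<lambda>s. \<bar>g' s\<bar>)"
    using FTC g'_cont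
    by (intro integral_norm_bound_integral integrable_continuous_real continuous_intros) auto
  then show ?thesis
    using FTC by (simp add: integral_unique)
qed

lemma abs_weighted_le_primitive:
  fixes g g' :: "real \<Rightarrow> real" and a t :: real
  assumes g_deriv: "\<And>t. t \<in> {-1<..<1} \<Longrightarrow> (g has_real_derivative g' t) (at t)"
    and g'_cont: "continuous_on {-1<..<1} g'"
    and "0 \<le> t" "t < 1"
  shows "\<bar>(1 - t\<^sup>2) powr a * g t\<bar>
    \<le> max 1 (2 powr a) * ((1 - t) powr a * (\<bar>g 0\<bar> + integral {0..t} (\<lambda>s. \<bar>g' s\<bar>)))"
proof -
  have "\<bar>g t\<bar> \<le> \<bar>g 0\<bar> + integral {0..t} (\<lambda>s. \<bar>g' s\<bar>)"
    using assms(3,4)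
    by (intro abs_le_integral_abs_deriv g_deriv continuous_on_subset[OF g'_cont]) auto
  then have "(1 - t\<^sup>2) powr a * \<bar>g t\<bar>
      \<le> (max 1 (2 powr a) * (1 - t) powr a) * (\<bar>g 0\<bar> + integral {0..t} (\<lambda>s. \<bar>g' s\<bar>))"
    using one_minus_square_powr_le[OF assms(3,4), of a] by (intro mult_mono) auto
  then show ?thesis
    by (simp add: abs_mult)
qed

lemma integrable_on_one_minus_powr_abs:
  fixes g' :: "real \<Rightarrow> real" and \<beta> :: real
  assumes "\<beta> \<ge> 0" and g'_cont: "continuous_on {-1<..<1} g'"
    and weighted_int: "set_integrable lborel {-1<..<1} (\<lambda>t. (1 - t\<^sup>2) powr \<beta> * g' t)"
  shows "(\<lambda>s. (1 - s) powr \<beta> * \<bar>g' s\<bar>) integrable_on {0..<1}"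
proof -
  have "set_integrable lborel {0..<1} (\<lambda>s. (1 - s) powr \<beta> * \<bar>g' s\<bar>)"
  proof (rule set_integrable_bound[OF set_integrable_subset[OF weighted_int]])
    show "set_borel_measurable lborel {0..<1} (\<lambda>s. (1 - s) powr \<beta> * \<bar>g' s\<bar>)"
      by (intro set_borel_measurable_lborel_continuous_on continuous_intros
          continuous_on_subset[OF g'_cont]) auto
    have "(1 - s) powr \<beta> \<le> (1 - s\<^sup>2) powr \<beta>" if "0 \<le> s" "s < 1" for s
      using that \<open>\<beta> \<ge> 0\<close> by (intro powr_mono2) (auto simp: power2_eq_square intro: mult_left_le_one_le)
    then show "AE s in lborel. s \<in> {0..<1} \<longrightarrow>
        norm ((1 - s) powr \<beta> * \<bar>g' s\<bar>) \<le> norm ((1 - s\<^sup>2) powr \<beta> * g' s)"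
      by (auto simp: abs_mult intro!: mult_right_mono)
  qed auto
  then show ?thesis
    by (rule set_borel_integral_eq_integral(1))
qed

lemma set_integrable_weighted_antiderivative_right_half:
  fixes g g' :: "real \<Rightarrow> real" and \<beta> :: real
  assumes "\<beta> > 0"
    and g_deriv: "\<And>t. t \<in> {-1<..<1} \<Longrightarrow> (g has_real_derivative g' t) (at t)"
    and g'_cont: "continuous_on {-1<..<1} g'"
    and weighted_int: "set_integrable lborel {-1<..<1} (\<lambda>t. (1 - t\<^sup>2) powr \<beta> * g' t)"
  shows "set_integrable lborel {0<..<1} (\<lambda>t. (1 - t\<^sup>2) powr (\<beta> - 1) * g t)"
proof (rule set_integrable_bound)
  define V where "V t = \<bar>g 0\<bar> + integral {0..t} (\<lambda>s. \<bar>g' s\<bar>)" for t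
  have "set_integrable lborel {0<..<1} (\<lambda>t. (1 - t) powr (\<beta> - 1) * V t)"
    unfolding V_def using \<open>\<beta> > 0\<close> g'_cont
    by (intro weighted_primitive_integrable integrable_on_one_minus_powr_abs weighted_int
        continuous_intros continuous_on_subset[OF g'_cont]) auto
  then show "set_integrable lborel {0<..<1} (\<lambda>t. max 1 (2 powr (\<beta> - 1)) * ((1 - t) powr (\<beta> - 1) * V t))"
    by (rule set_integrable_mult_right)
  have "continuous_on {0<..<1} g"
    by (rule DERIV_continuous_on[OF has_field_derivative_at_within[OF g_deriv]]) auto
  then show "set_borel_measurable lborel {0<..<1} (\<lambda>t. (1 - t\<^sup>2) powr (\<beta> - 1) * g t)"
    by (intro set_borel_measurable_lborel_continuous_on continuous_intros)
      (auto simp: abs_square_less_1 power2_eq_1_iff)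
  show "AE t in lborel. t \<in> {0<..<1} \<longrightarrow> norm ((1 - t\<^sup>2) powr (\<beta> - 1) * g t)
      \<le> norm (max 1 (2 powr (\<beta> - 1)) * ((1 - t) powr (\<beta> - 1) * V t))"
  proof (intro AE_I2 impI)
    fix t :: real
    assume t: "t \<in> {0<..<1}"
    then have "\<bar>(1 - t\<^sup>2) powr (\<beta> - 1) * g t\<bar> \<le> max 1 (2 powr (\<beta> - 1)) * ((1 - t) powr (\<beta> - 1) * V t)"
      unfolding V_def by (intro abs_weighted_le_primitive g_deriv g'_cont) auto
    then show "norm ((1 - t\<^sup>2) powr (\<beta> - 1) * g t)
        \<le> norm (max 1 (2 powr (\<beta> - 1)) * ((1 - t) powr (\<beta> - 1) * V t))"
      by simp
  qed
qed

lemma tendsto_weighted_antiderivative_at_left_1: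
  fixes g g' :: "real \<Rightarrow> real" and \<beta> :: real
  assumes "\<beta> > 0"
    and g_deriv: "\<And>t. t \<in> {-1<..<1} \<Longrightarrow> (g has_real_derivative g' t) (at t)"
    and g'_cont: "continuous_on {-1<..<1} g'"
    and weighted_int: "set_integrable lborel {-1<..<1} (\<lambda>t. (1 - t\<^sup>2) powr \<beta> * g' t)"
  shows "((\<lambda>t. (1 - t\<^sup>2) powr \<beta> * g t) \<longlongrightarrow> 0) (at_left 1)"
proof (rule Lim_null_comparison)
  define V where "V t = \<bar>g 0\<bar> + integral {0..t} (\<lambda>s. \<bar>g' s\<bar>)" for t
  have "((\<lambda>t. (1 - t) powr \<beta> * \<bar>g 0\<bar>) \<longlongrightarrow> 0 * \<bar>g 0\<bar>) (at_left 1)"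
    using \<open>\<beta> > 0\<close> by (intro tendsto_intros tendsto_diff_powr_at_left)
  moreover have "((\<lambda>t. (1 - t) powr \<beta> * integral {0..t} (\<lambda>s. \<bar>g' s\<bar>)) \<longlongrightarrow> 0) (at_left 1)"
    using \<open>\<beta> > 0\<close>
    by (intro weighted_primitive_tendsto_0 integrable_on_one_minus_powr_abs weighted_int
        continuous_intros continuous_on_subset[OF g'_cont]) auto
  ultimately have "((\<lambda>t. (1 - t) powr \<beta> * V t) \<longlongrightarrow> 0) (at_left 1)"
    unfolding V_def distrib_left using tendsto_add by fastforce
  then show "((\<lambda>t. max 1 (2 powr \<beta>) * ((1 - t) powr \<beta> * V t)) \<longlongrightarrow> 0) (at_left 1)"
    by (rule tendsto_mult_right_zero)
  show "\<forall>\<^sub>F t in at_left 1. norm ((1 - t\<^sup>2) powr \<beta> * g t) \<le> max 1 (2 powr \<beta>) * ((1 - t) powr \<beta> * V t)"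
    unfolding eventually_at_left_field V_def
    by (intro exI[of _ 0]) (auto intro!: abs_weighted_le_primitive g_deriv g'_cont)
qed

lemma set_integrable_reflect:
  fixes f :: "real \<Rightarrow> real"
  assumes "set_integrable lborel {a<..<b} f"
  shows "set_integrable lborel {-b<..<-a} (\<lambda>x. f (- x))"
proof -
  have "integrable lborel (\<lambda>x. indicator {a<..<b} (0 + (-1) * x) *\<^sub>R f (0 + (-1) * x))"
    using assms unfolding set_integrable_def by (subst lborel_integrable_real_affine_iff) auto
  moreover have "(\<lambda>x. indicator {a<..<b} (0 + (-1) * x) *\<^sub>R f (0 + (-1) * x))
      = (\<lambda>x. indicator {-b<..<-a} x *\<^sub>R f (- x))"
    by (auto simp: indicator_def fun_eq_iff)
  ultimately show ?thesis
    by (simp add: set_integrable_def)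
qed

lemma weighted_antiderivative_integrable_vanishing:
  fixes g g' :: "real \<Rightarrow> real" and \<beta> :: real
  assumes "\<beta> > 0"
    and g_deriv: "\<And>t. t \<in> {-1<..<1} \<Longrightarrow> (g has_real_derivative g' t) (at t)"
    and g'_cont: "continuous_on {-1<..<1} g'"
    and weighted_int: "set_integrable lborel {-1<..<1} (\<lambda>t. (1 - t\<^sup>2) powr \<beta> * g' t)"
  shows "set_integrable lborel {-1<..<1} (\<lambda>t. (1 - t\<^sup>2) powr (\<beta> - 1) * g t)"
    and "((\<lambda>t. (1 - t\<^sup>2) powr \<beta> * g t) \<longlongrightarrow> 0) (at_left 1)"
    and "((\<lambda>t. (1 - t\<^sup>2) powr \<beta> * g t) \<longlongrightarrow> 0) (at_right (-1))"
proof -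
  note right = set_integrable_weighted_antiderivative_right_half[OF assms]
    tendsto_weighted_antiderivative_at_left_1[OF assms]
  have reflected_deriv: "((\<lambda>t. g (- t)) has_real_derivative - g' (- t)) (at t)" if "t \<in> {-1<..<1}" for t
    using DERIV_mirror[of g "g' (- t)" t] g_deriv[of "- t"] that by auto
  have reflected_cont: "continuous_on {-1<..<1} (\<lambda>t. - g' (- t))"
    by (intro continuous_intros continuous_on_compose2[OF g'_cont]) auto
  have reflected_int: "set_integrable lborel {-1<..<1} (\<lambda>t. (1 - t\<^sup>2) powr \<beta> * - g' (- t))"
    using set_integrable_mult_right[of "-1", OF set_integrable_reflect[OF weighted_int]] by simp
  note left = set_integrable_weighted_antiderivative_right_half[OF \<open>\<beta> > 0\<close> reflected_deriv reflected_cont reflected_int]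
    tendsto_weighted_antiderivative_at_left_1[OF \<open>\<beta> > 0\<close> reflected_deriv reflected_cont reflected_int]
  show "((\<lambda>t. (1 - t\<^sup>2) powr \<beta> * g t) \<longlongrightarrow> 0) (at_left 1)"
    by (rule right(2))
  have "((\<lambda>t. (1 - t\<^sup>2) powr \<beta> * g t) \<longlongrightarrow> 0) (filtermap uminus (at_left 1))"
    unfolding filterlim_filtermap using left(2) by simp
  then show "((\<lambda>t. (1 - t\<^sup>2) powr \<beta> * g t) \<longlongrightarrow> 0) (at_right (-1))"
    by (simp add: at_right_minus)
  have cont: "continuous_on {-1<..<1} (\<lambda>t. (1 - t\<^sup>2) powr (\<beta> - 1) * g t)"
    by (intro continuous_intros DERIV_continuous_on[OF has_field_derivative_at_within[OF g_deriv]])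
      (auto simp: abs_square_less_1 power2_eq_1_iff)
  have "set_integrable lborel {-1/2..1/2} (\<lambda>t. (1 - t\<^sup>2) powr (\<beta> - 1) * g t)"
    by (intro borel_integrable_atLeastAtMost' continuous_on_subset[OF cont]) auto
  moreover have "set_integrable lborel {-1<..<0} (\<lambda>t. (1 - t\<^sup>2) powr (\<beta> - 1) * g t)"
    using set_integrable_reflect[OF left(1)] by simp
  ultimately have "set_integrable lborel ({-1<..<0} \<union> {-1/2..1/2} \<union> {0<..<1})
      (\<lambda>t. (1 - t\<^sup>2) powr (\<beta> - 1) * g t)"
    by (intro set_integrable_Un right(1)) auto
  moreover have "{-1<..<0} \<union> {-1/2..1/2} \<union> {0<..<1} = {-1<..<(1::real)}"
    by auto
  ultimately show "set_integrable lborel {-1<..<1} (\<lambda>t. (1 - t\<^sup>2) powr (\<beta> - 1) * g t)"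
    by simp
qed

section \<open>Rodrigues weights\<close>

lemma higher_deriv_one_minus_square_powr:
  fixes \<alpha> :: real
  shows "\<exists>p. \<forall>t\<in>{-1<..<1}.
    (deriv ^^ j) (\<lambda>s. (1 - s\<^sup>2) powr \<alpha>) t = (1 - t\<^sup>2) powr (\<alpha> - real j) * poly p t"
proof (induction j)
  case 0
  show ?case
    by (rule exI[of _ 1]) simp
next
  case (Suc j)
  then obtain p where p: "\<And>t. t \<in> {-1<..<1} \<Longrightarrow>
      (deriv ^^ j) (\<lambda>s. (1 - s\<^sup>2) powr \<alpha>) t = (1 - t\<^sup>2) powr (\<alpha> - real j) * poly p t"
    by blast
  define \<gamma> where "\<gamma> = \<alpha> - real j"
  \<comment> \<open>Chosen so that \<open>((1 - t^2)^\<gamma> p)' = (1 - t^2)^(\<gamma>-1) q\<close>.\<close>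
  define q where "q = [:0, -2 * \<gamma>:] * p + [:1, 0, -1:] * pderiv p"
  have "(deriv ^^ Suc j) (\<lambda>s. (1 - s\<^sup>2) powr \<alpha>) t = (1 - t\<^sup>2) powr (\<alpha> - real (Suc j)) * poly q t"
    if t: "t \<in> {-1<..<1}" for t
  proof -
    have pos: "1 - t\<^sup>2 > 0"
      using t by (simp add: abs_square_less_1 abs_less_iff)
    have "((\<lambda>s. (1 - s\<^sup>2) powr \<gamma> * poly p s) has_real_derivative
        \<gamma> * (1 - t\<^sup>2) powr (\<gamma> - 1) * (- (2 * t)) * poly p t + (1 - t\<^sup>2) powr \<gamma> * poly (pderiv p) t) (at t)"
      using pos by (intro derivative_eq_intros refl) auto
    moreover have "\<gamma> * (1 - t\<^sup>2) powr (\<gamma> - 1) * (- (2 * t)) * poly p t + (1 - t\<^sup>2) powr \<gamma> * poly (pderiv p) t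
        = (1 - t\<^sup>2) powr (\<alpha> - real (Suc j)) * poly q t"
    proof -
      have lower: "(1 - t\<^sup>2) powr \<gamma> = (1 - t\<^sup>2) powr (\<gamma> - 1) * (1 - t\<^sup>2)"
        using pos by (simp add: powr_diff)
      have shift: "\<alpha> - real (Suc j) = \<gamma> - 1"
        by (simp add: \<gamma>_def)
      show ?thesis
        unfolding lower shift by (simp add: q_def algebra_simps power2_eq_square)
    qed
    ultimately have "((\<lambda>s. (1 - s\<^sup>2) powr \<gamma> * poly p s) has_real_derivative
        (1 - t\<^sup>2) powr (\<alpha> - real (Suc j)) * poly q t) (at t)"
      by simp
    then have "((deriv ^^ j) (\<lambda>s. (1 - s\<^sup>2) powr \<alpha>) has_real_derivative
        (1 - t\<^sup>2) powr (\<alpha> - real (Suc j)) * poly q t) (at t)"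
      by (rule has_field_derivative_transform_within_open[of _ _ _ "{-1<..<1}"])
        (use t p in \<open>auto simp: \<gamma>_def\<close>)
    then show ?thesis
      by (simp add: DERIV_imp_deriv)
  qed
  then show ?case
    by blast
qed

lemma has_real_derivative_higher_deriv_one_minus_square_powr:
  fixes \<alpha> t :: real
  assumes "t \<in> {-1<..<1}"
  shows "((deriv ^^ j) (\<lambda>s. (1 - s\<^sup>2) powr \<alpha>) has_real_derivative
    (deriv ^^ Suc j) (\<lambda>s. (1 - s\<^sup>2) powr \<alpha>) t) (at t)"
proof -
  obtain p where p: "\<And>t. t \<in> {-1<..<1} \<Longrightarrow>
      (deriv ^^ j) (\<lambda>s. (1 - s\<^sup>2) powr \<alpha>) t = (1 - t\<^sup>2) powr (\<alpha> - real j) * poly p t"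
    using higher_deriv_one_minus_square_powr by blast
  have "1 - t\<^sup>2 > 0"
    using assms by (simp add: abs_square_less_1 abs_less_iff)
  then obtain D where "((\<lambda>s. (1 - s\<^sup>2) powr (\<alpha> - real j) * poly p s) has_real_derivative D) (at t)"
    by (intro that derivative_eq_intros refl) auto
  then have "((deriv ^^ j) (\<lambda>s. (1 - s\<^sup>2) powr \<alpha>) has_real_derivative D) (at t)"
    by (rule has_field_derivative_transform_within_open[of _ _ _ "{-1<..<1}"]) (use assms p in auto)
  then show ?thesis
    by (simp add: DERIV_imp_deriv)
qed

lemma set_integral_higher_deriv_weight_by_parts:
  fixes g g' :: "real \<Rightarrow> real" and \<beta> :: real and k :: nat
  assumes "\<beta> > 0"
    and g_deriv: "\<And>t. t \<in> {-1<..<1} \<Longrightarrow> (g has_real_derivative g' t) (at t)"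
    and g'_cont: "continuous_on {-1<..<1} g'"
    and weighted_int: "set_integrable lborel {-1<..<1} (\<lambda>t. (1 - t\<^sup>2) powr \<beta> * g' t)"
  defines "W \<equiv> \<lambda>j. (deriv ^^ j) (\<lambda>s. (1 - s\<^sup>2) powr (\<beta> + real k))"
  shows "(LINT t:{-1<..<1}|lborel. W k t * g' t) = - (LINT t:{-1<..<1}|lborel. W (Suc k) t * g t)"
proof -
  note g_weighted = weighted_antiderivative_integrable_vanishing[OF assms(1-4)]
  obtain p where "\<forall>t\<in>{-1<..<1}. W k t = (1 - t\<^sup>2) powr (\<beta> + real k - real k) * poly p t"
    using higher_deriv_one_minus_square_powr unfolding W_def by blast
  then have p: "\<And>t. t \<in> {-1<..<1} \<Longrightarrow> W k t = (1 - t\<^sup>2) powr \<beta> * poly p t"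
    by simp
  obtain q where "\<forall>t\<in>{-1<..<1}. W (Suc k) t = (1 - t\<^sup>2) powr (\<beta> + real k - real (Suc k)) * poly q t"
    using higher_deriv_one_minus_square_powr unfolding W_def by blast
  then have q: "\<And>t. t \<in> {-1<..<1} \<Longrightarrow> W (Suc k) t = (1 - t\<^sup>2) powr (\<beta> - 1) * poly q t"
    by (simp add: algebra_simps)
  have W_deriv: "(W j has_real_derivative W (Suc j) t) (at t)" if "t \<in> {-1<..<1}" for j t
    unfolding W_def using has_real_derivative_higher_deriv_one_minus_square_powr[OF that] .
  have g_cont: "continuous_on {-1<..<1} g"
    by (rule DERIV_continuous_on[OF has_field_derivative_at_within[OF g_deriv]])
  have "(LINT t:{-1<..<1}|lborel. W k t * g' t) = 0 - 0 - (LINT t:{-1<..<1}|lborel. W (Suc k) t * g t)"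
  proof (rule set_integral_by_parts)
    show "continuous_on {-1<..<1} (W (Suc k))"
      by (rule DERIV_continuous_on[OF has_field_derivative_at_within[OF W_deriv]])
    have "set_integrable lborel {-1<..<1} (\<lambda>t. poly p t * ((1 - t\<^sup>2) powr \<beta> * g' t))"
      by (intro set_integrable_poly_mult weighted_int continuous_intros g'_cont)
        (auto simp: abs_square_less_1 power2_eq_1_iff)
    then show "set_integrable lborel {-1<..<1} (\<lambda>t. W k t * g' t)"
      by (rule set_integrable_cong[THEN iffD1, rotated -1]) (auto simp: p)
    have "set_integrable lborel {-1<..<1} (\<lambda>t. poly q t * ((1 - t\<^sup>2) powr (\<beta> - 1) * g t))"
      by (intro set_integrable_poly_mult g_weighted(1) continuous_intros g_cont)
        (auto simp: abs_square_less_1 power2_eq_1_iff)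
    then show "set_integrable lborel {-1<..<1} (\<lambda>t. W (Suc k) t * g t)"
      by (rule set_integrable_cong[THEN iffD1, rotated -1]) (auto simp: q)
    have "((\<lambda>t. poly p t * ((1 - t\<^sup>2) powr \<beta> * g t)) \<longlongrightarrow> poly p 1 * 0) (at_left 1)"
      by (intro tendsto_intros g_weighted(2))
    moreover have "\<forall>\<^sub>F t in at_left 1. poly p t * ((1 - t\<^sup>2) powr \<beta> * g t) = W k t * g t"
      unfolding eventually_at_left_field by (intro exI[of _ "-1"]) (auto simp: p)
    ultimately show "((\<lambda>t. W k t * g t) \<longlongrightarrow> 0) (at_left 1)"
      by (simp add: tendsto_cong)
    have "((\<lambda>t. poly p t * ((1 - t\<^sup>2) powr \<beta> * g t)) \<longlongrightarrow> poly p (-1) * 0) (at_right (-1))"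
      by (intro tendsto_intros g_weighted(3))
    moreover have "\<forall>\<^sub>F t in at_right (-1). poly p t * ((1 - t\<^sup>2) powr \<beta> * g t) = W k t * g t"
      unfolding eventually_at_right_field by (intro exI[of _ 1]) (auto simp: p)
    ultimately show "((\<lambda>t. W k t * g t) \<longlongrightarrow> 0) (at_right (-1))"
      by (simp add: tendsto_cong)
  qed (use W_deriv g_deriv g'_cont in auto)
  then show ?thesis
    by simp
qed

definition rodrigues_const :: "nat \<Rightarrow> nat \<Rightarrow> real" where
  "rodrigues_const N k = (-1) ^ k * Gamma ((real N - 1) / 2) / (2 ^ k * Gamma ((real N - 1) / 2 + real k))"

lemma multiplier_eq_integral_higher_deriv:
  "multiplier N k h = sphere_area (N - 1) * rodrigues_const N k *
    (LINT t:{-1<..<1}|lborel. (deriv ^^ k) (\<lambda>s. (1 - s\<^sup>2) powr ((real N - 3) / 2 + real k)) t * h t)"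
proof -
  have "legendre N k t * (1 - t\<^sup>2) powr ((real N - 3) / 2) * h t
      = rodrigues_const N k * ((deriv ^^ k) (\<lambda>s. (1 - s\<^sup>2) powr ((real N - 3) / 2 + real k)) t * h t)"
    if "t \<in> {-1<..<1}" for t
  proof -
    have "1 - t\<^sup>2 > 0"
      using that by (simp add: abs_square_less_1 abs_less_iff)
    then have "(1 - t\<^sup>2) powr (- ((real N - 3) / 2)) * (1 - t\<^sup>2) powr ((real N - 3) / 2) = 1"
      by (simp add: powr_add[symmetric])
    then show ?thesis
      unfolding legendre_def rodrigues_const_def by (simp add: algebra_simps)
  qed
  then have "(LINT t:{-1<..<1}|lborel. legendre N k t * (1 - t\<^sup>2) powr ((real N - 3) / 2) * h t)
      = (LINT t:{-1<..<1}|lborel. rodrigues_const N k *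
          ((deriv ^^ k) (\<lambda>s. (1 - s\<^sup>2) powr ((real N - 3) / 2 + real k)) t * h t))"
    by (intro set_lebesgue_integral_cong) auto
  then show ?thesis
    unfolding multiplier_def by simp
qed

lemma sphere_area_rodrigues_const_shift:
  assumes "n \<ge> 2"
  shows "sphere_area (n + 1) * rodrigues_const (n + 2) k
    = - 2 * pi * (sphere_area (n - 1) * rodrigues_const n (k + 1))"
proof -
  define b where "b = (real n - 1) / 2"
  have "b > 0"
    using assms by (simp add: b_def)
  then have "Gamma b \<noteq> 0" "Gamma (b + 1) \<noteq> 0" "Gamma (b + 1 + real k) \<noteq> 0"
    by (auto intro!: Gamma_real_pos[THEN less_imp_neq, symmetric] simp del: Gamma_eq_zero_iff)
  moreover have args: "real (n + 1) / 2 = b + 1" "(real (n + 2) - 1) / 2 = b + 1"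
    "real (n - 1) / 2 = b" "(real n - 1) / 2 = b" "b + real (k + 1) = b + 1 + real k"
    using assms by (auto simp: b_def of_nat_diff field_simps)
  moreover have "pi powr (b + 1) = pi * pi powr b"
    by (simp add: powr_add)
  ultimately show ?thesis
    unfolding sphere_area_def rodrigues_const_def args by (simp add: field_simps)
qed

theorem lemma5p4:
  fixes n :: nat and g g' :: "real \<Rightarrow> real"
  assumes "n \<ge> 3"
    and "\<And>t. t \<in> {-1<..<1} \<Longrightarrow> (g has_real_derivative g' t) (at t)"
    and "continuous_on {-1<..<1} g'"
    and "set_integrable lborel {-1<..<1} (\<lambda>t. (1 - t\<^sup>2) powr ((real n - 1) / 2) * g' t)"
  shows "set_integrable lborel {-1<..<1} (\<lambda>t. (1 - t\<^sup>2) powr ((real n - 3) / 2) * g t)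
    \<and> (\<forall>k. multiplier (n + 2) k g' = 2 * pi * multiplier n (k + 1) g)"
proof (intro conjI allI)
  define \<beta> where "\<beta> = (real n - 1) / 2"
  have "\<beta> > 0" and "(real n - 3) / 2 = \<beta> - 1"
    using assms(1) by (simp_all add: \<beta>_def field_simps)
  note hyps = \<open>\<beta> > 0\<close> assms(2,3) assms(4)[folded \<beta>_def]
  show "set_integrable lborel {-1<..<1} (\<lambda>t. (1 - t\<^sup>2) powr ((real n - 3) / 2) * g t)"
    unfolding \<open>(real n - 3) / 2 = \<beta> - 1\<close> by (rule weighted_antiderivative_integrable_vanishing(1)[OF hyps])
  fix k
  have exponents: "(real (n + 2) - 3) / 2 + real k = \<beta> + real k"
    "(real n - 3) / 2 + real (k + 1) = \<beta> + real k"
    by (simp_all add: \<beta>_def field_simps)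
  show "multiplier (n + 2) k g' = 2 * pi * multiplier n (k + 1) g"
    unfolding multiplier_eq_integral_higher_deriv exponents
    using set_integral_higher_deriv_weight_by_parts[OF hyps, of k]
      sphere_area_rodrigues_const_shift[of n k] assms(1)
    by simp
qed

end
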